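(* Let $G$ be a graph, $V\subseteq V(G)$ and $k\geq 0$. If every ordering $SV$ of $V$ has a witnessing matching of size at least $k$, then the partial matching width of $V$ is at least $k/2$.
   Context: Partial matching width of $V\subseteq V(G)$: the largest integer $k$ such that for every ordering of $V$ there is a prefix $SV'$ (viewed as a set) such that $G$ has a matching of size at least $k$ each of whose edges has one endpoint in $SV'$ and the other in $V(G)\setminus SV'$. Witnessing matching: for an ordering $SV$ of $V$, a partition of $SV$ into a prefix $SV_1$ and a suffix $SV_2$ supports an edge $\{u,v\}$ if either one endpoint is in $SV_1$ and the other in $SV_2$, or one endpoint is in $V$ and the other in $V(G)\setminus V$. A matching $M$ is witnessing for $SV$ if some partition of $SV$ into a prefix and a suffix supports every edge of $M$. *)

theory Defs
  imports Main
begin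

definition graph :: "'a set \<Rightarrow> 'a set set \<Rightarrow> bool" where
  "graph VG E \<longleftrightarrow> finite VG \<and> (\<forall>e\<in>E. \<exists>u v. e = {u, v} \<and> u \<noteq> v \<and> u \<in> VG \<and> v \<in> VG)"

definition matching :: "'a set set \<Rightarrow> 'a set set \<Rightarrow> bool" where
  "matching E M \<longleftrightarrow> M \<subseteq> E \<and> (\<forall>e1\<in>M. \<forall>e2\<in>M. e1 \<noteq> e2 \<longrightarrow> e1 \<inter> e2 = {})"

definition orderings :: "'a set \<Rightarrow> 'a list set" where
  "orderings V = {xs. distinct xs \<and> set xs = V}"

definition crosses :: "'a set \<Rightarrow> 'a set \<Rightarrow> 'a set \<Rightarrow> bool" where
  "crosses VG S e \<longleftrightarrow> (\<exists>u v. e = {u, v} \<and> u \<in> S \<and> v \<in> VG - S)"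

definition pmw_ok :: "'a set \<Rightarrow> 'a set set \<Rightarrow> 'a set \<Rightarrow> nat \<Rightarrow> bool" where
  "pmw_ok VG E V k \<longleftrightarrow> (\<forall>xs\<in>orderings V. \<exists>i\<le>length xs. \<exists>M.
      matching E M \<and> card M \<ge> k \<and> (\<forall>e\<in>M. crosses VG (set (take i xs)) e))"

definition pmw :: "'a set \<Rightarrow> 'a set set \<Rightarrow> 'a set \<Rightarrow> nat" where
  "pmw VG E V = (GREATEST k. pmw_ok VG E V k)"

definition supports :: "'a set \<Rightarrow> 'a set \<Rightarrow> 'a set \<Rightarrow> 'a set \<Rightarrow> 'a set \<Rightarrow> bool" where
  "supports VG V S1 S2 e \<longleftrightarrow> (\<exists>u v. e = {u, v} \<and>
      ((u \<in> S1 \<and> v \<in> S2) \<or> (u \<in> V \<and> v \<in> VG - V)))"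

definition witnessing :: "'a set \<Rightarrow> 'a set \<Rightarrow> 'a list \<Rightarrow> 'a set set \<Rightarrow> bool" where
  "witnessing VG V xs M \<longleftrightarrow> (\<exists>i\<le>length xs.
      \<forall>e\<in>M. supports VG V (set (take i xs)) (set (drop i xs)) e)"

end

theory Submission
  imports Defs
begin

text \<open>An edge supported by the split of an ordering at position i either crosses the
  cut at the prefix of length i, or it joins V to its complement and so crosses the cut
  at the full ordering. Splitting a witnessing matching into these two classes, one of
  them keeps at least half of its edges, and each class is a matching crossing a single
  prefix cut.\<close>

lemma graph_finite_edges:
  assumes "graph VG E"
  shows "finite E"
proof -
  have "E \<subseteq> Pow VG" using assms unfolding graph_def by fastforce
  moreover have "finite VG" using assms unfolding graph_def by simp
  ultimately show ?thesis by (rule finite_subset[OF _ finite_Pow_iff[THEN iffD2]])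
qed

lemma matching_subset:
  assumes "matching E M" "M' \<subseteq> M"
  shows "matching E M'"
  using assms unfolding matching_def by blast

lemma orderings_nonempty:
  assumes "finite V"
  shows "orderings V \<noteq> {}"
  using finite_distinct_list[OF assms] unfolding orderings_def by blast

lemma pmw_ok_le_card_edges:
  assumes "graph VG E" "V \<subseteq> VG" "pmw_ok VG E V k"
  shows "k \<le> card E"
proof -
  have "finite V" using assms(1,2) unfolding graph_def by (auto intro: finite_subset)
  then obtain xs where "xs \<in> orderings V" using orderings_nonempty by blast
  then obtain M where "matching E M" "k \<le> card M"
    using assms(3) unfolding pmw_ok_def by blast
  moreover have "card M \<le> card E"
    using \<open>matching E M\<close> graph_finite_edges[OF assms(1)]
    unfolding matching_def by (simp add: card_mono)
  ultimately show ?thesis by simp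
qed

lemma pmw_ok_le_pmw:
  assumes "graph VG E" "V \<subseteq> VG" "pmw_ok VG E V k"
  shows "k \<le> pmw VG E V"
  unfolding pmw_def
  by (rule Greatest_le_nat[where b = "card E"], rule assms(3))
    (use assms(1,2) pmw_ok_le_card_edges in blast)

lemma supports_imp_crosses_prefix_or_all:
  assumes "xs \<in> orderings V" "V \<subseteq> VG"
    and "supports VG V (set (take i xs)) (set (drop i xs)) e"
  shows "crosses VG (set (take i xs)) e \<or> crosses VG V e"
proof -
  have "distinct xs" "set xs = V" using assms(1) unfolding orderings_def by auto
  obtain u v where e: "e = {u, v}"
    and uv: "(u \<in> set (take i xs) \<and> v \<in> set (drop i xs)) \<or> (u \<in> V \<and> v \<in> VG - V)"
    using assms(3) unfolding supports_def by blast
  show ?thesis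
  proof (cases "u \<in> set (take i xs) \<and> v \<in> set (drop i xs)")
    case True
    have "v \<notin> set (take i xs)"
      using True \<open>distinct xs\<close> set_take_disj_set_drop_if_distinct by fastforce
    moreover have "v \<in> VG"
      using True assms(2) \<open>set xs = V\<close> by (auto dest: in_set_dropD)
    ultimately show ?thesis unfolding crosses_def using True e by blast
  next
    case False
    then show ?thesis unfolding crosses_def using uv e by blast
  qed
qed

lemma half_card_le_card_of_cover:
  assumes "finite M1" "finite M2" "M \<subseteq> M1 \<union> M2"
  shows "(card M + 1) div 2 \<le> card M1 \<or> (card M + 1) div 2 \<le> card M2"
proof -
  have "card M \<le> card (M1 \<union> M2)" using assms by (simp add: card_mono)
  also have "\<dots> \<le> card M1 + card M2" by (rule card_Un_le)
  finally show ?thesis by linarith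
qed

lemma witnessing_imp_crossing_matching:
  assumes "graph VG E" "V \<subseteq> VG" "xs \<in> orderings V"
    and "matching E M" "witnessing VG V xs M"
  shows "\<exists>j\<le>length xs. \<exists>M'. matching E M' \<and> (card M + 1) div 2 \<le> card M'
           \<and> (\<forall>e\<in>M'. crosses VG (set (take j xs)) e)"
proof -
  obtain i where i: "i \<le> length xs"
    and supp: "\<forall>e\<in>M. supports VG V (set (take i xs)) (set (drop i xs)) e"
    using assms(5) unfolding witnessing_def by blast
  have full: "set (take (length xs) xs) = V" using assms(3) unfolding orderings_def by simp
  define M1 where "M1 = {e\<in>M. crosses VG (set (take i xs)) e}"
  define M2 where "M2 = {e\<in>M. crosses VG V e}"
  have "finite M"
    using assms(4) graph_finite_edges[OF assms(1)] unfolding matching_def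
    by (blast intro: finite_subset)
  moreover have "M \<subseteq> M1 \<union> M2"
    unfolding M1_def M2_def
    using supp supports_imp_crosses_prefix_or_all[OF assms(3,2)] by blast
  ultimately have "(card M + 1) div 2 \<le> card M1 \<or> (card M + 1) div 2 \<le> card M2"
    by (intro half_card_le_card_of_cover) (auto simp: M1_def M2_def)
  moreover have "matching E M1" "matching E M2"
    using assms(4) by (auto intro: matching_subset simp: M1_def M2_def)
  ultimately show ?thesis
  proof (elim disjE)
    assume "(card M + 1) div 2 \<le> card M1"
    then show ?thesis using i \<open>matching E M1\<close> unfolding M1_def by blast
  next
    assume "(card M + 1) div 2 \<le> card M2"
    then show ?thesis
      using \<open>matching E M2\<close> full unfolding M2_def by (intro exI[of _ "length xs"]) auto
  qed
qed

theorem proposition3: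
  fixes VG :: "'a set" and E :: "'a set set" and V :: "'a set" and k :: nat
  assumes "graph VG E"
    and "V \<subseteq> VG"
    and "\<forall>xs\<in>orderings V. \<exists>M. matching E M \<and> witnessing VG V xs M \<and> card M \<ge> k"
  shows "2 * pmw VG E V \<ge> k"
proof -
  have "pmw_ok VG E V ((k + 1) div 2)"
    unfolding pmw_ok_def
  proof
    fix xs assume xs: "xs \<in> orderings V"
    then obtain M where M: "matching E M" "witnessing VG V xs M" "k \<le> card M"
      using assms(3) by blast
    then have "(k + 1) div 2 \<le> (card M + 1) div 2" by (simp add: div_le_mono)
    with witnessing_imp_crossing_matching[OF assms(1,2) xs M(1,2)]
    show "\<exists>i\<le>length xs. \<exists>M. matching E M \<and> (k + 1) div 2 \<le> card M
            \<and> (\<forall>e\<in>M. crosses VG (set (take i xs)) e)"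
      using le_trans by blast
  qed
  then have "(k + 1) div 2 \<le> pmw VG E V" by (rule pmw_ok_le_pmw[OF assms(1,2)])
  then show ?thesis by linarith
qed

end
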